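(* Fix $\lambda_1,\lambda_2,\lambda_3\in\mathbb{Z}_{\ge0}$ and an infinite reduced sequence $\mathbf{w}=[w_1,w_2,\dots]$. Then the ratio number sequence $\{k_j\}_{j\ge1}$ associated with $\mathbf{w}$ is strictly increasing.
   Context: Generalized Markov mutations: $\mu_1(x_1,x_2,x_3)=(\frac{x_2^2+\lambda_1x_2x_3+x_3^2}{x_1},x_2,x_3)$, $\mu_2(x_1,x_2,x_3)=(x_1,\frac{x_1^2+\lambda_2x_1x_3+x_3^2}{x_2},x_3)$, $\mu_3(x_1,x_2,x_3)=(x_1,x_2,\frac{x_1^2+\lambda_3x_1x_2+x_2^2}{x_3})$. A sequence with entries in $\{1,2,3\}$ is reduced if consecutive entries differ. Ratio number sequence: $T_0=(1,1,1)$, $T_j=\mu_{w_j}(T_{j-1})$, and $k_j$ is the $w_j$-th component of $T_j$ divided by the product of the other two components of $T_j$. *)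

theory Defs
  imports Main Complex_Main
begin

type_synonym triple = "real \<times> real \<times> real"

definition gmut :: "nat \<Rightarrow> nat \<Rightarrow> nat \<Rightarrow> nat \<Rightarrow> triple \<Rightarrow> triple" where
  "gmut l1 l2 l3 i t = (case t of (x1, x2, x3) \<Rightarrow>
     (if i = 1 then ((x2^2 + real l1 * x2 * x3 + x3^2) / x1, x2, x3)
      else if i = 2 then (x1, (x1^2 + real l2 * x1 * x3 + x3^2) / x2, x3)
      else if i = 3 then (x1, x2, (x1^2 + real l3 * x1 * x2 + x2^2) / x3)
      else (x1, x2, x3)))"

definition comp :: "nat \<Rightarrow> triple \<Rightarrow> real" where
  "comp i t = (case t of (x1, x2, x3) \<Rightarrow>
     (if i = 1 then x1 else if i = 2 then x2 else x3))"

text \<open>T_0 = (1,1,1), T_j = mu_{w_j}(T_{j-1}); the sequence w is indexed from 1 (w 0 unused).\<close>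
primrec Tseq :: "nat \<Rightarrow> nat \<Rightarrow> nat \<Rightarrow> (nat \<Rightarrow> nat) \<Rightarrow> nat \<Rightarrow> triple" where
  "Tseq l1 l2 l3 w 0 = (1, 1, 1)"
| "Tseq l1 l2 l3 w (Suc j) = gmut l1 l2 l3 (w (Suc j)) (Tseq l1 l2 l3 w j)"

definition ratio_num :: "nat \<Rightarrow> nat \<Rightarrow> nat \<Rightarrow> (nat \<Rightarrow> nat) \<Rightarrow> nat \<Rightarrow> real" where
  "ratio_num l1 l2 l3 w j =
     comp (w j) (Tseq l1 l2 l3 w j) /
     (\<Prod>i\<in>{1,2,3} - {w j}. comp i (Tseq l1 l2 l3 w j))"

definition reduced_seq :: "(nat \<Rightarrow> nat) \<Rightarrow> bool" where
  "reduced_seq w \<longleftrightarrow> (\<forall>j\<ge>1. w j \<in> {1,2,3} \<and> w (Suc j) \<noteq> w j)"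

end

theory Submission
  imports Defs
begin

text \<open>
  Let \<open>w\<^sub>j = a\<close> and \<open>w\<^sub>j\<^sub>+\<^sub>1 = b \<noteq> a\<close>, and write \<open>P = x\<^sub>1 x\<^sub>2 x\<^sub>3\<close> for the product of the
  components of \<open>T\<^sub>j\<close>. Then \<open>k\<^sub>j P = x\<^sub>a\<^sup>2\<close>, while the mutation \<open>\<mu>\<^sub>b\<close> changes only \<open>x\<^sub>b\<close>
  into \<open>x\<^sub>b'\<close>, so \<open>k\<^sub>j\<^sub>+\<^sub>1 P = x\<^sub>b' x\<^sub>b\<close>. The exchange relation makes \<open>x\<^sub>b' x\<^sub>b\<close> equal to
  \<open>x\<^sub>a\<^sup>2\<close> plus a positive term, because all components stay positive.
\<close>

definition ratio_at :: "nat \<Rightarrow> triple \<Rightarrow> real" where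
  "ratio_at a t = comp a t / (\<Prod>i\<in>{1,2,3} - {a}. comp i t)"

lemma ratio_num_eq_ratio_at: "ratio_num l1 l2 l3 w j = ratio_at (w j) (Tseq l1 l2 l3 w j)"
  by (simp add: ratio_num_def ratio_at_def)

lemma comp_gmut_pos:
  assumes "\<And>i. 0 < comp i t"
  shows "0 < comp i (gmut l1 l2 l3 k t)"
proof -
  obtain x1 x2 x3 where t: "t = (x1, x2, x3)" by (cases t)
  have "0 < x1" "0 < x2" "0 < x3"
    using assms[of 1] assms[of 2] assms[of 3] by (simp_all add: t comp_def)
  then show ?thesis
    by (simp add: t gmut_def comp_def add_pos_nonneg)
qed

lemma comp_Tseq_pos: "0 < comp i (Tseq l1 l2 l3 w j)"
proof (induction j arbitrary: i)
  case 0
  then show ?case by (simp add: comp_def)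
next
  case (Suc j)
  then show ?case by (simp add: comp_gmut_pos)
qed

lemma comp_gmut_other:
  assumes "i \<in> {1,2,3}" "i \<noteq> k"
  shows "comp i (gmut l1 l2 l3 k t) = comp i t"
  using assms by (cases t) (auto simp: gmut_def comp_def)

lemma comp_gmut_exchange_gt:
  assumes pos: "\<And>i. 0 < comp i t"
    and "a \<in> {1,2,3}" "k \<in> {1,2,3}" "a \<noteq> k"
  shows "(comp a t)\<^sup>2 < comp k (gmut l1 l2 l3 k t) * comp k t"
proof -
  obtain x1 x2 x3 where t: "t = (x1, x2, x3)" by (cases t)
  have "0 < x1" "0 < x2" "0 < x3"
    using pos[of 1] pos[of 2] pos[of 3] by (simp_all add: t comp_def)
  then show ?thesis
    using assms(2-4) by (auto simp: t gmut_def comp_def add_pos_nonneg add_nonneg_pos)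
qed

lemma ratio_at_gmut_gt:
  assumes pos: "\<And>i. 0 < comp i t"
    and a: "a \<in> {1,2,3}" and k: "k \<in> {1,2,3}" and "a \<noteq> k"
  shows "ratio_at a t < ratio_at k (gmut l1 l2 l3 k t)"
proof -
  let ?t' = "gmut l1 l2 l3 k t"
  define P where "P = (\<Prod>i\<in>{1,2,3}. comp i t)"
  have P_pos: "0 < P"
    unfolding P_def using pos by (intro prod_pos) auto
  have P_split: "P = comp j t * (\<Prod>i\<in>{1,2,3} - {j}. comp i t)" if "j \<in> {1,2,3}" for j
    unfolding P_def using that by (intro prod.remove) auto
  have rest_nonzero: "(\<Prod>i\<in>{1,2,3} - {j}. comp i t) \<noteq> 0" for j
    using pos by (simp add: less_imp_neq[symmetric])
  have "ratio_at a t * P = (comp a t)\<^sup>2"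
    using P_split[OF a] rest_nonzero[of a]
    by (simp add: ratio_at_def power2_eq_square del: prod_zero_iff)
  also have "\<dots> < comp k ?t' * comp k t"
    using comp_gmut_exchange_gt[OF pos a k \<open>a \<noteq> k\<close>] .
  also have "\<dots> = ratio_at k ?t' * P"
  proof -
    have "(\<Prod>i\<in>{1,2,3} - {k}. comp i ?t') = (\<Prod>i\<in>{1,2,3} - {k}. comp i t)"
      by (intro prod.cong) (auto simp: comp_gmut_other)
    then show ?thesis
      using P_split[OF k] rest_nonzero[of k] by (simp add: ratio_at_def del: prod_zero_iff)
  qed
  finally show ?thesis
    using P_pos by simp
qed

lemma ratio_num_Suc_gt:
  assumes "reduced_seq w" "1 \<le> j"
  shows "ratio_num l1 l2 l3 w j < ratio_num l1 l2 l3 w (Suc j)"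
proof -
  have "w j \<in> {1,2,3}" "w (Suc j) \<in> {1,2,3}" "w j \<noteq> w (Suc j)"
    using assms by (auto simp: reduced_seq_def)
  then show ?thesis
    unfolding ratio_num_eq_ratio_at
    by (simp add: ratio_at_gmut_gt comp_Tseq_pos)
qed

theorem lemma6p1:
  fixes l1 l2 l3 :: nat and w :: "nat \<Rightarrow> nat"
  assumes "reduced_seq w"
  shows "\<forall>i j. 1 \<le> i \<longrightarrow> i < j \<longrightarrow> ratio_num l1 l2 l3 w i < ratio_num l1 l2 l3 w j"
proof (intro allI impI)
  fix i j :: nat
  assume "1 \<le> i" "i < j"
  then have "{i..<j} \<subseteq> {1..}"
    by auto
  with ratio_num_Suc_gt[OF assms] \<open>i < j\<close>
  show "ratio_num l1 l2 l3 w i < ratio_num l1 l2 l3 w j"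
    by (rule lift_Suc_mono_less_ivl) simp
qed

end
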